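(* Assume (A1)–(A4) and $P^\star\in\Pi_{K^\star}\setminus\Pi_{K^\star-1}$ with $K^\star<\infty$. (a) If, for every $K\ge1$, $P^\star\notin\Pi_K$ implies $H(P^\star|\Pi_{K+1})<H(P^\star|\Pi_K)$, then $P^\star$-a.s. $\widehat K_n^L\ge K^\star$ for all $n$ large enough. (b) $P^\star$-a.s., $\widehat K_n^G\ge K^\star$ for all $n$ large enough.
   Context: Setting: $(\mathcal Z,\mathcal F)$ is a Polish space with its Borel $\sigma$-field and $\mu$ a $\sigma$-finite measure on it. $Z_1,Z_2,\dots$ are i.i.d. $\mathcal Z$-valued random variables with common law $P^\star\ll\mu$, density $p^\star$, $\ell^\star=\log p^\star$; $P^\star$ also denotes the law of the whole sequence. $\{(\Theta_K,d)\}_{K\ge1}$ is an increasing (nested) sequence of metric spaces, $\Theta_\infty=\bigcup_K\Theta_K$; for $\theta\in\Theta_\infty$, $P_\theta$ is a probability measure with density $p_\theta$ w.r.t. $\mu$ and $\ell_\theta=\log p_\theta$. $\Pi_K=\{P_\theta:\theta\in\Theta_K\}$, $\Pi_0=\emptyset$. The order of $P^\star$ is $K^\star=\min\{K:P^\star\in\Pi_K\}$. $H(P|Q)=\int\log(dP/dQ)\,dP$ if $P\ll Q$ and $+\infty$ otherwise; $H(P|\Pi)=\inf_{Q\in\Pi}H(P|Q)$. Given a penalty $\mathrm{pen}(n,K)>0$, $\mathrm{crit}(n,K)=\sup_{\theta\in\Theta_K}\sum_{i=1}^n\ell_\theta(Z_i)-\mathrm{pen}(n,K)$, $\widehat K_n^L=\inf\{K\ge1:\mathrm{crit}(n,K)\ge\mathrm{crit}(n,K+1)\}$,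 and $\widehat K_n^G$ is the smallest maximizer of $K\mapsto\mathrm{crit}(n,K)$. All suprema are assumed measurable. Standing assumptions: (A1) each $(\Theta_K,d)$ is compact and each $\Pi_K$ is compact for the weak topology; (A2) for each $z$ and $K$, $\theta\mapsto\ell_\theta(z)$ is continuous on $\Theta_K$; (A3) there are $l,u:\mathcal Z\to\mathbb R$ with $u-l\in L^1(P^\star)$, $l\le\ell^\star\le u$ and $l\le\ell_\theta\le u$ for all $\theta\in\Theta_\infty$; (A4) for each $n$, $\mathrm{pen}(n,\cdot)$ is increasing, and for each $K$, $\mathrm{pen}(n,K)\to\infty$ and $\mathrm{pen}(n,K)=o(n)$ as $n\to\infty$. *)

theory Defs
  imports "HOL-Probability.Probability"
begin

definition dens_measure :: "'z measure \<Rightarrow> ('z \<Rightarrow> real) \<Rightarrow> 'z measure" where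
  "dens_measure mu f = density mu (\<lambda>z. ennreal (f z))"

text \<open>Since the negative part of log(dP/dQ) is always P-integrable, non-integrability means
  the integral is +infinity.  KL_divergence b M N is the library's int log_b(dN/dM) dN.\<close>
definition KL :: "'a measure \<Rightarrow> 'a measure \<Rightarrow> ereal" where
  "KL P Q = (if absolutely_continuous Q P \<and> integrable P (\<lambda>x. ln (enn2real (RN_deriv Q P x)))
             then ereal (KL_divergence (exp 1) Q P) else \<infinity>)"

definition KL_set :: "'a measure \<Rightarrow> 'a measure set \<Rightarrow> ereal" where
  "KL_set P S = (INF Q\<in>S. KL P Q)"

definition weak_conv_seq :: "(nat \<Rightarrow> 'z::topological_space measure) \<Rightarrow> 'z measure \<Rightarrow> bool" where
  "weak_conv_seq Ps P \<longleftrightarrow>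
     (\<forall>f::'z \<Rightarrow> real. continuous_on UNIV f \<and> bounded (range f) \<longrightarrow>
        (\<lambda>n. \<integral>z. f z \<partial>(Ps n)) \<longlonglongrightarrow> (\<integral>z. f z \<partial>P))"

text \<open>Compactness for the weak topology (sequential; the weak topology on probability
  measures over a Polish space is metrizable).\<close>
definition weakly_seq_compact :: "'z::topological_space measure set \<Rightarrow> bool" where
  "weakly_seq_compact S \<longleftrightarrow>
     (\<forall>Ps::nat \<Rightarrow> 'z measure. (\<forall>n. Ps n \<in> S) \<longrightarrow> (\<exists>Q\<in>S. \<exists>r::nat \<Rightarrow> nat. strict_mono r \<and> weak_conv_seq (Ps \<circ> r) Q))"

definition model_class :: "'z measure \<Rightarrow> ('p \<Rightarrow> 'z \<Rightarrow> real) \<Rightarrow> (nat \<Rightarrow> 'p set) \<Rightarrow> nat \<Rightarrow> 'z measure set" where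
  "model_class mu p Theta K = (if K = 0 then {} else (\<lambda>\<theta>. dens_measure mu (p \<theta>)) ` Theta K)"

text \<open>crit(n,K) = sup_{theta in Theta_K} sum_{i=1}^n log p_theta(Z_i) - pen(n,K)
  (observations indexed Z 0, ..., Z (n-1)).\<close>
definition crit :: "('p \<Rightarrow> 'z \<Rightarrow> real) \<Rightarrow> (nat \<Rightarrow> 'p set) \<Rightarrow> (nat \<Rightarrow> nat \<Rightarrow> real)
    \<Rightarrow> (nat \<Rightarrow> 'w \<Rightarrow> 'z) \<Rightarrow> nat \<Rightarrow> nat \<Rightarrow> 'w \<Rightarrow> ereal" where
  "crit p Theta pen Z n K \<omega> =
     (SUP \<theta>\<in>Theta K. ereal (\<Sum>i<n. ln (p \<theta> (Z i \<omega>)))) - ereal (pen n K)"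

definition KhatL :: "('p \<Rightarrow> 'z \<Rightarrow> real) \<Rightarrow> (nat \<Rightarrow> 'p set) \<Rightarrow> (nat \<Rightarrow> nat \<Rightarrow> real)
    \<Rightarrow> (nat \<Rightarrow> 'w \<Rightarrow> 'z) \<Rightarrow> nat \<Rightarrow> 'w \<Rightarrow> enat" where
  "KhatL p Theta pen Z n \<omega> =
     Inf {enat K | K. 1 \<le> K \<and> crit p Theta pen Z n (Suc K) \<omega> \<le> crit p Theta pen Z n K \<omega>}"

definition KhatG :: "('p \<Rightarrow> 'z \<Rightarrow> real) \<Rightarrow> (nat \<Rightarrow> 'p set) \<Rightarrow> (nat \<Rightarrow> nat \<Rightarrow> real)
    \<Rightarrow> (nat \<Rightarrow> 'w \<Rightarrow> 'z) \<Rightarrow> nat \<Rightarrow> 'w \<Rightarrow> enat" where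
  "KhatG p Theta pen Z n \<omega> =
     (if \<exists>K\<ge>1. \<forall>K'\<ge>1. crit p Theta pen Z n K' \<omega> \<le> crit p Theta pen Z n K \<omega>
      then enat (LEAST K. 1 \<le> K \<and> (\<forall>K'\<ge>1. crit p Theta pen Z n K' \<omega> \<le> crit p Theta pen Z n K \<omega>))
      else \<infinity>)"

end

theory Submission
  imports Defs
begin

text \<open>
  For K < K* no P\<theta> with \<theta> \<in> \<Theta> K equals P*, so by Gibbs' inequality the expected
  log-likelihood ratio E log (p\<theta> / p*) = - H(P*|P\<theta>) is negative on \<Theta> K; being continuous on
  the compact set \<Theta> K it stays below some c < 0.  A one-sided law of large numbers holding
  uniformly over \<Theta> K (cover \<Theta> K by finitely many balls and apply the strong law to the
  supremum of the log ratio over each ball, taken along a countable dense subset) bounds the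
  maximized log-likelihood at level K by the true one plus n c, while at level K* the true
  parameter attains the true log-likelihood.  Since pen(n, K*) = o(n), eventually almost surely
  crit(n, K) < crit(n, K*) for all K < K*, which rules them out as maximizers.  Part (a) is the
  same comparison between K and K + 1: a strict decrease of H(P*|\<Pi> K) yields a parameter in
  \<Theta> (K + 1) whose expected log ratio exceeds every value on \<Theta> K.

  The one-sided strong law is proved from scratch: Hoeffding's inequality and Borel-Cantelli for
  bounded variables, and, for the nonnegative integrable remainder, Chebyshev's inequality on
  dyadic blocks of variables truncated at the block length.
\<close>

lemma sum_truncated_square_le:
  fixes x :: real
  assumes "0 \<le> x"
  shows "(\<Sum>m<N. (min x (2^m))\<^sup>2 / 2^m) \<le> 4 * x"
proof -
  have mono: "4 * a - a\<^sup>2 / y \<le> 4 * b - b\<^sup>2 / y"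
    if "0 \<le> a" "a \<le> b" "b \<le> 2 * y" "0 < y" for a b y :: real
  proof -
    have "0 \<le> (b - a) * (4 * y - (a + b))" using that by (intro mult_nonneg_nonneg) auto
    then have "b\<^sup>2 - a\<^sup>2 \<le> 4 * y * (b - a)" by (simp add: algebra_simps power2_eq_square)
    then have "(b\<^sup>2 - a\<^sup>2) / y \<le> 4 * (b - a)"
      by (simp only: pos_divide_le_eq[OF that(4)]) (simp add: algebra_simps)
    then show ?thesis by (simp add: diff_divide_distrib)
  qed
  \<comment> \<open>This sharper bound is the one that survives the induction.\<close>
  have "(\<Sum>m<N. (min x (2^m))\<^sup>2 / 2^m) \<le> 4 * min x (2^N) - 2 * (min x (2^N))\<^sup>2 / 2^N"
  proof (induction N)
    case 0
    have "min x 1 * min x 1 \<le> min x 1 * 1" using assms by (intro mult_left_mono) auto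
    then have "(min x 1)\<^sup>2 \<le> min x 1" by (simp add: power2_eq_square)
    moreover have "0 \<le> min x 1" using assms by simp
    ultimately show ?case by (simp only: lessThan_0 sum.empty power_0 div_by_1)
  next
    case (Suc N)
    have "4 * min x (2^N) - (min x (2^N))\<^sup>2 / 2^N \<le> 4 * min x (2^Suc N) - (min x (2^Suc N))\<^sup>2 / 2^N"
      using assms by (intro mono) (auto simp: min_def)
    moreover have "2 * (min x (2^Suc N))\<^sup>2 / 2^Suc N = (min x (2^Suc N))\<^sup>2 / 2^N" by simp
    ultimately show ?case using Suc.IH by (simp only: sum.lessThan_Suc)
  qed
  also have "\<dots> \<le> 4 * x"
  proof -
    have "0 \<le> 2 * (min x (2^N))\<^sup>2 / 2^N" by simp
    then show ?thesis using min.cobounded1[of x "2^N"] by linarith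
  qed
  finally show ?thesis .
qed

lemma eventually_sum_le_of_dyadic:
  fixes a :: "nat \<Rightarrow> real"
  assumes nonneg: "\<And>i. 0 \<le> a i" and "0 \<le> B"
    and dyadic: "eventually (\<lambda>m. (\<Sum>i<2^m. a i) \<le> 2^m * B) sequentially"
  shows "eventually (\<lambda>n. (\<Sum>i<n. a i) \<le> 2 * real n * B) sequentially"
proof -
  obtain m0 where m0: "\<And>m. m0 \<le> m \<Longrightarrow> (\<Sum>i<2^m. a i) \<le> 2^m * B"
    using dyadic unfolding eventually_sequentially by blast
  have "(\<Sum>i<n. a i) \<le> 2 * real n * B" if n: "2^m0 \<le> n" for n
  proof -
    have "1 \<le> n" using n le_trans[OF one_le_power[of "2::nat" m0]] by simp
    then obtain m where m: "2^m \<le> n" "n < 2^Suc m" using ex_power_ivl1[of 2 n] by auto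
    have "m0 < Suc m" using n m(2) by (metis le_less_trans nat_power_less_imp_less zero_less_numeral)
    have "(\<Sum>i<n. a i) \<le> (\<Sum>i<2^Suc m. a i)" using m(2) nonneg by (intro sum_mono2) auto
    also have "\<dots> \<le> 2^Suc m * B" using m0[of "Suc m"] \<open>m0 < Suc m\<close> by linarith
    also have "\<dots> \<le> 2 * real n * B"
      using m(1) \<open>0 \<le> B\<close> by (intro mult_right_mono) (simp_all flip: of_nat_le_iff)
    finally show ?thesis .
  qed
  then show ?thesis unfolding eventually_sequentially by blast
qed

lemma compact_countable_dense:
  fixes T :: "'a::metric_space set"
  assumes "compact T"
  obtains C where "countable C" "C \<subseteq> T" "T \<subseteq> closure C"
proof -
  have "\<exists>F. finite F \<and> F \<subseteq> T \<and> T \<subseteq> (\<Union>x\<in>F. ball x (1 / Suc n))" for n :: nat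
    using seq_compact_imp_totally_bounded[OF compact_imp_seq_compact[OF assms]] by simp
  then obtain F where F: "\<And>n. finite (F n) \<and> F n \<subseteq> T \<and> T \<subseteq> (\<Union>x\<in>F n. ball x (1 / Suc n))"
    by metis
  show ?thesis
  proof (rule that[of "\<Union>n. F n"])
    show "countable (\<Union>n. F n)" by (rule countable_UN) (use F in \<open>auto intro: countable_finite\<close>)
    show "(\<Union>n. F n) \<subseteq> T" using F by auto
    show "T \<subseteq> closure (\<Union>n. F n)"
    proof (clarsimp simp: closure_approachable)
      fix \<theta> and e :: real assume "\<theta> \<in> T" "0 < e"
      then obtain n :: nat where n: "1 / Suc n < e" by (metis nat_approx_posE)
      obtain x where x: "x \<in> F n" "dist x \<theta> < 1 / Suc n"
        using F[of n] \<open>\<theta> \<in> T\<close> by (force simp: mem_ball)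
      show "\<exists>n. \<exists>x\<in>F n. dist x \<theta> < e" using n x by (meson order.strict_trans)
    qed
  qed
qed

lemma le_cSUP_dense_ball:
  fixes f :: "'a::metric_space \<Rightarrow> real"
  assumes cont: "continuous_on T f" and C: "C \<subseteq> T" "T \<subseteq> closure C"
    and \<theta>: "\<theta> \<in> T" "dist \<theta>0 \<theta> < r" and bdd: "bdd_above (f ` (C \<inter> ball \<theta>0 r))"
  shows "f \<theta> \<le> (SUP x\<in>C \<inter> ball \<theta>0 r. f x)"
proof -
  have "\<theta> \<in> closure (ball \<theta>0 r \<inter> C)"
    using open_Int_closure_subset[OF open_ball, of \<theta>0 r C] C \<theta> by auto
  then obtain x where x: "\<And>n. x n \<in> ball \<theta>0 r \<inter> C" "x \<longlonglongrightarrow> \<theta>"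
    unfolding closure_sequential by blast
  have "(\<lambda>n. f (x n)) \<longlonglongrightarrow> f \<theta>"
    using x C by (intro continuous_on_tendsto_compose[OF cont x(2) \<theta>(1)] always_eventually) auto
  then show ?thesis
    by (rule LIMSEQ_le_const2) (use x(1) in \<open>auto intro!: cSUP_upper bdd\<close>)
qed

lemma dense_Int_ball_nonempty:
  fixes \<theta>0 :: "'a::metric_space"
  assumes "T \<subseteq> closure C" "\<theta>0 \<in> T" "0 < r"
  shows "C \<inter> ball \<theta>0 r \<noteq> {}"
  using assms by (force simp: closure_approachable mem_ball dist_commute)

lemma tendsto_cSUP_dense_ball:
  fixes f :: "'a::metric_space \<Rightarrow> real"
  assumes cont: "continuous_on T f" and C: "C \<subseteq> T" "T \<subseteq> closure C" and "\<theta>0 \<in> T"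
    and bdd: "\<And>r. bdd_above (f ` (C \<inter> ball \<theta>0 r))"
  shows "(\<lambda>j. SUP x\<in>C \<inter> ball \<theta>0 (1 / Suc j). f x) \<longlonglongrightarrow> f \<theta>0"
proof (rule order_tendstoI)
  fix a assume "a < f \<theta>0"
  moreover have "f \<theta>0 \<le> (SUP x\<in>C \<inter> ball \<theta>0 (1 / Suc j). f x)" for j
    using \<open>\<theta>0 \<in> T\<close> by (intro le_cSUP_dense_ball[OF cont C _ _ bdd]) auto
  ultimately show "eventually (\<lambda>j. a < (SUP x\<in>C \<inter> ball \<theta>0 (1 / Suc j). f x)) sequentially"
    by (intro always_eventually allI) (auto intro: less_le_trans)
next
  fix a assume "f \<theta>0 < a"
  then obtain d where "0 < d" and d: "\<And>x. x \<in> T \<Longrightarrow> dist x \<theta>0 < d \<Longrightarrow> dist (f x) (f \<theta>0) < (a - f \<theta>0) / 2"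
    using cont \<open>\<theta>0 \<in> T\<close> unfolding continuous_on_iff by (metis half_gt_zero diff_gt_0_iff_gt)
  then obtain j0 :: nat where "1 / Suc j0 < d" by (metis nat_approx_posE)
  have "(SUP x\<in>C \<inter> ball \<theta>0 (1 / Suc j). f x) < a" if "j0 \<le> j" for j
  proof -
    have "1 / real (Suc j) \<le> 1 / Suc j0" using that by (intro divide_left_mono) auto
    with \<open>1 / Suc j0 < d\<close> have r: "1 / Suc j < d" by linarith
    have "C \<inter> ball \<theta>0 (1 / Suc j) \<noteq> {}" using C(2) \<open>\<theta>0 \<in> T\<close> by (rule dense_Int_ball_nonempty) simp
    then have "(SUP x\<in>C \<inter> ball \<theta>0 (1 / Suc j). f x) \<le> f \<theta>0 + (a - f \<theta>0) / 2"
    proof (rule cSUP_least)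
      fix x assume "x \<in> C \<inter> ball \<theta>0 (1 / Suc j)"
      then have "dist (f x) (f \<theta>0) < (a - f \<theta>0) / 2"
        using C r by (intro d) (auto simp: mem_ball dist_commute)
      then show "f x \<le> f \<theta>0 + (a - f \<theta>0) / 2"
        unfolding dist_real_def using abs_ge_self[of "f x - f \<theta>0"] by linarith
    qed
    also have "\<dots> < a" using \<open>f \<theta>0 < a\<close> by (simp add: field_simps)
    finally show ?thesis .
  qed
  then show "eventually (\<lambda>j. (SUP x\<in>C \<inter> ball \<theta>0 (1 / Suc j). f x) < a) sequentially"
    unfolding eventually_sequentially by blast
qed

lemma compact_continuous_less_gap:
  fixes f :: "'a::metric_space \<Rightarrow> real"
  assumes "compact S" "continuous_on S f" "\<And>x. x \<in> S \<Longrightarrow> f x < a"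
  obtains c where "c < a" "\<And>x. x \<in> S \<Longrightarrow> f x < c"
proof (cases "S = {}")
  case True
  then show ?thesis using that[of "a - 1"] by simp
next
  case False
  then obtain m where "m \<in> S" "\<And>x. x \<in> S \<Longrightarrow> f x \<le> f m"
    using continuous_attains_sup[OF assms(1) False assms(2)] by blast
  then show ?thesis using that[of "(f m + a) / 2"] assms(3)[of m] by fastforce
qed

lemma continuous_on_integral_dominated:
  fixes F :: "'a::metric_space \<Rightarrow> 'b \<Rightarrow> real"
  assumes meas: "\<And>\<theta>. \<theta> \<in> T \<Longrightarrow> F \<theta> \<in> borel_measurable Q"
    and cont: "\<And>z. z \<in> space Q \<Longrightarrow> continuous_on T (\<lambda>\<theta>. F \<theta> z)"
    and "integrable Q G" and bound: "\<And>\<theta> z. \<theta> \<in> T \<Longrightarrow> z \<in> space Q \<Longrightarrow> \<bar>F \<theta> z\<bar> \<le> G z"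
  shows "continuous_on T (\<lambda>\<theta>. \<integral>z. F \<theta> z \<partial>Q)"
proof (rule continuous_on_sequentiallyI)
  fix x \<theta> assume x: "\<forall>n. x n \<in> T" and "\<theta> \<in> T" and "x \<longlonglongrightarrow> \<theta>"
  show "(\<lambda>n. \<integral>z. F (x n) z \<partial>Q) \<longlonglongrightarrow> (\<integral>z. F \<theta> z \<partial>Q)"
  proof (rule integral_dominated_convergence[where w=G])
    show "AE z in Q. (\<lambda>n. F (x n) z) \<longlonglongrightarrow> F \<theta> z"
      using x \<open>\<theta> \<in> T\<close> \<open>x \<longlonglongrightarrow> \<theta>\<close> by (intro AE_I2 continuous_on_tendsto_compose[OF cont]) auto
  qed (use meas x \<open>\<theta> \<in> T\<close> \<open>integrable Q G\<close> bound in auto)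
qed

lemma tendsto_integral_excess_0:
  fixes f :: "'a \<Rightarrow> real"
  assumes "integrable M f"
  shows "(\<lambda>j::nat. \<integral>x. max (\<bar>f x\<bar> - real j) 0 \<partial>M) \<longlonglongrightarrow> 0"
proof -
  have "(\<lambda>j::nat. \<integral>x. max (\<bar>f x\<bar> - real j) 0 \<partial>M) \<longlonglongrightarrow> (\<integral>x. 0 \<partial>M)"
  proof (rule integral_dominated_convergence[where w="\<lambda>x. \<bar>f x\<bar>"])
    have "eventually (\<lambda>j. max (\<bar>f x\<bar> - real j) 0 = 0) sequentially" for x
      using eventually_ge_at_top[of "nat \<lceil>\<bar>f x\<bar>\<rceil>"] by eventually_elim auto
    then show "AE x in M. (\<lambda>j. max (\<bar>f x\<bar> - real j) 0) \<longlonglongrightarrow> 0" by (auto intro: tendsto_eventually)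
  qed (use assms in auto)
  then show ?thesis by simp
qed

lemma local_integrable_majorant:
  fixes F :: "'p::metric_space \<Rightarrow> 'b \<Rightarrow> real"
  assumes "compact T"
    and meas: "\<And>\<theta>. \<theta> \<in> T \<Longrightarrow> F \<theta> \<in> borel_measurable Q"
    and cont: "\<And>z. z \<in> space Q \<Longrightarrow> continuous_on T (\<lambda>\<theta>. F \<theta> z)"
    and "integrable Q G" and bound: "\<And>\<theta> z. \<theta> \<in> T \<Longrightarrow> z \<in> space Q \<Longrightarrow> \<bar>F \<theta> z\<bar> \<le> G z"
    and "\<theta>0 \<in> T" and less: "(\<integral>z. F \<theta>0 z \<partial>Q) < c"
  obtains r W where "0 < r" "integrable Q W" "(\<integral>z. W z \<partial>Q) < c"
    "\<And>\<theta> z. \<theta> \<in> T \<Longrightarrow> dist \<theta>0 \<theta> < r \<Longrightarrow> z \<in> space Q \<Longrightarrow> F \<theta> z \<le> W z"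
proof -
  obtain C where C: "countable C" "C \<subseteq> T" "T \<subseteq> closure C"
    using compact_countable_dense[OF \<open>compact T\<close>] .
  \<comment> \<open>Taking the supremum over a countable dense set keeps it measurable; by continuity it still
    dominates F on the whole ball.\<close>
  define W where "W r z = (SUP \<theta>\<in>C \<inter> ball \<theta>0 r. F \<theta> z)" for r z
  have bdd: "bdd_above ((\<lambda>\<theta>. F \<theta> z) ` (C \<inter> ball \<theta>0 r))" if "z \<in> space Q" for r z
  proof (rule bdd_aboveI2)
    show "F \<theta> z \<le> G z" if "\<theta> \<in> C \<inter> ball \<theta>0 r" for \<theta>
      using bound[of \<theta> z] C that \<open>z \<in> space Q\<close> by auto
  qed
  have W_ge: "F \<theta> z \<le> W r z" if "\<theta> \<in> T" "dist \<theta>0 \<theta> < r" "z \<in> space Q" for \<theta> r z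
    unfolding W_def using C that by (intro le_cSUP_dense_ball[OF cont] bdd) auto
  have W_bound: "\<bar>W r z\<bar> \<le> G z" if "z \<in> space Q" "0 < r" for r z
  proof -
    have "- G z \<le> W r z"
      using bound[OF \<open>\<theta>0 \<in> T\<close> that(1)] W_ge[OF \<open>\<theta>0 \<in> T\<close> _ that(1), of r] that(2) by simp
    moreover have "W r z \<le> G z"
      unfolding W_def using dense_Int_ball_nonempty[OF C(3) \<open>\<theta>0 \<in> T\<close> that(2)]
    proof (rule cSUP_least)
      show "F \<theta> z \<le> G z" if "\<theta> \<in> C \<inter> ball \<theta>0 r" for \<theta>
        using bound[of \<theta> z] that C \<open>z \<in> space Q\<close> by auto
    qed
    ultimately show ?thesis by simp
  qed
  have [measurable]: "W r \<in> borel_measurable Q" for r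
    unfolding W_def using C meas bdd by (intro borel_measurable_cSUP) auto
  have "(\<lambda>j. \<integral>z. W (1 / Suc j) z \<partial>Q) \<longlonglongrightarrow> (\<integral>z. F \<theta>0 z \<partial>Q)"
  proof (rule integral_dominated_convergence[where w=G])
    show "AE z in Q. (\<lambda>j. W (1 / Suc j) z) \<longlonglongrightarrow> F \<theta>0 z"
      unfolding W_def using C \<open>\<theta>0 \<in> T\<close> bdd by (intro AE_I2 tendsto_cSUP_dense_ball[OF cont]) auto
  qed (use meas \<open>\<theta>0 \<in> T\<close> \<open>integrable Q G\<close> W_bound in auto)
  then have "eventually (\<lambda>j. (\<integral>z. W (1 / Suc j) z \<partial>Q) < c) sequentially"
    using less by (rule order_tendstoD(2))
  then obtain j where "(\<integral>z. W (1 / Suc j) z \<partial>Q) < c"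
    unfolding eventually_sequentially by auto
  moreover have "integrable Q (W (1 / Suc j))"
  proof (rule Bochner_Integration.integrable_bound[OF \<open>integrable Q G\<close>])
    show "AE z in Q. norm (W (1 / Suc j) z) \<le> norm (G z)"
      using W_bound by (intro AE_I2) (auto intro: order.trans[OF _ abs_ge_self])
  qed simp
  ultimately show ?thesis using that[of "1 / Suc j" "W (1 / Suc j)"] W_ge by simp
qed

lemma (in prob_space) variance_sum_indep:
  fixes Y :: "'i \<Rightarrow> 'a \<Rightarrow> real"
  assumes fin: "finite I" and indep: "indep_vars (\<lambda>_. borel) Y I"
    and bnd: "\<And>i \<omega>. i \<in> I \<Longrightarrow> \<omega> \<in> space M \<Longrightarrow> \<bar>Y i \<omega>\<bar> \<le> B"
  shows "variance (\<lambda>\<omega>. \<Sum>i\<in>I. Y i \<omega>) = (\<Sum>i\<in>I. variance (Y i))"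
proof -
  have [measurable]: "i \<in> I \<Longrightarrow> Y i \<in> borel_measurable M" for i
    using indep unfolding indep_vars_def by auto
  have int: "integrable M (Y i)" if "i \<in> I" for i
    by (rule integrable_const_bound[where B=B]) (use bnd that in auto)
  have int2: "integrable M (\<lambda>\<omega>. Y i \<omega> * Y j \<omega>)" if "i \<in> I" "j \<in> I" for i j
  proof (rule integrable_const_bound[where B="B * B"])
    show "AE \<omega> in M. norm (Y i \<omega> * Y j \<omega>) \<le> B * B"
      using bnd[OF that(1)] bnd[OF that(2)] by (intro AE_I2) (simp add: abs_mult mult_mono')
  qed (use that in auto)
  have cross: "expectation (\<lambda>\<omega>. Y i \<omega> * Y j \<omega>)
      = expectation (Y i) * expectation (Y j) + (if i = j then variance (Y i) else 0)"
    if "i \<in> I" "j \<in> I" for i j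
  proof (cases "i = j")
    case True
    then show ?thesis using variance_eq[OF int] int2 that by (simp add: power2_eq_square)
  next
    case False
    have "indep_vars (\<lambda>_. borel) Y {i, j}" using indep_vars_subset[OF indep] that by auto
    then have "expectation (\<lambda>\<omega>. \<Prod>k\<in>{i, j}. Y k \<omega>) = (\<Prod>k\<in>{i, j}. expectation (Y k))"
      using int that by (intro indep_vars_lebesgue_integral) auto
    then show ?thesis using False by simp
  qed
  define S where "S \<omega> = (\<Sum>i\<in>I. Y i \<omega>)" for \<omega>
  have S2: "(S \<omega>)\<^sup>2 = (\<Sum>i\<in>I. \<Sum>j\<in>I. Y i \<omega> * Y j \<omega>)" for \<omega>
    unfolding S_def by (simp add: power2_eq_square sum_product)
  have intS: "integrable M S" unfolding S_def using int by auto
  have intS2: "integrable M (\<lambda>\<omega>. (S \<omega>)\<^sup>2)" unfolding S2 using int2 by auto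
  have "expectation (\<lambda>\<omega>. (S \<omega>)\<^sup>2)
      = (\<Sum>i\<in>I. \<Sum>j\<in>I. expectation (Y i) * expectation (Y j) + (if i = j then variance (Y i) else 0))"
    unfolding S2 using int2 cross by (simp add: Bochner_Integration.integral_sum)
  also have "\<dots> = (expectation S)\<^sup>2 + (\<Sum>i\<in>I. variance (Y i))"
    unfolding S_def using int fin
    by (simp add: Bochner_Integration.integral_sum sum.distrib power2_eq_square sum_product)
  finally show ?thesis using variance_eq[OF intS intS2] unfolding S_def by simp
qed

lemma (in finite_measure) summable_truncated_second_moments:
  fixes h :: "'a \<Rightarrow> real"
  assumes [measurable]: "h \<in> borel_measurable M" and nonneg: "\<And>z. z \<in> space M \<Longrightarrow> 0 \<le> h z"
    and int_h: "integrable M h"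
  shows "summable (\<lambda>m::nat. \<integral>z. (min (h z) (2^m))\<^sup>2 / 2^m \<partial>M)"
proof (rule summableI_nonneg_bounded[where x="4 * (\<integral>z. h z \<partial>M)"])
  have int: "integrable M (\<lambda>z. (min (h z) (2^m))\<^sup>2 / 2^m)" for m :: nat
  proof (rule integrable_const_bound[where B="2^m"])
    have "(min (h z) (2^m))\<^sup>2 / 2^m \<le> 2^m" if "z \<in> space M" for z
      using nonneg[OF that] by (simp add: pos_divide_le_eq power2_eq_square mult_mono)
    then show "AE z in M. norm ((min (h z) (2^m))\<^sup>2 / 2^m) \<le> 2^m" by (intro AE_I2) simp
  qed simp
  show "0 \<le> (\<integral>z. (min (h z) (2^m))\<^sup>2 / 2^m \<partial>M)" for m :: nat by (intro integral_nonneg_AE) auto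
  show "(\<Sum>m<n. \<integral>z. (min (h z) (2^m))\<^sup>2 / 2^m \<partial>M) \<le> 4 * (\<integral>z. h z \<partial>M)" for n
  proof -
    have "(\<Sum>m<n. \<integral>z. (min (h z) (2^m))\<^sup>2 / 2^m \<partial>M) = (\<integral>z. (\<Sum>m<n. (min (h z) (2^m))\<^sup>2 / 2^m) \<partial>M)"
      using int by (simp add: Bochner_Integration.integral_sum)
    also have "\<dots> \<le> (\<integral>z. 4 * h z \<partial>M)"
      using int int_h nonneg sum_truncated_square_le by (intro integral_mono) auto
    finally show ?thesis by simp
  qed
qed

lemma AE_eventually_ball_finite:
  assumes "finite I" "\<And>i. i \<in> I \<Longrightarrow> AE x in M. eventually (P i x) F"
  shows "AE x in M. eventually (\<lambda>n. \<forall>i\<in>I. P i x n) F"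
proof -
  have "AE x in M. \<forall>i\<in>I. eventually (P i x) F" using assms by (intro AE_finite_allI) auto
  then show ?thesis by (rule eventually_mono) (simp add: eventually_ball_finite_distrib[OF \<open>finite I\<close>])
qed

section \<open>One-sided laws of large numbers for i.i.d. sequences\<close>

locale iid_sequence = prob_space +
  fixes N :: "'b measure" and X :: "nat \<Rightarrow> 'a \<Rightarrow> 'b" and Q :: "'b measure"
  assumes indep_X: "indep_vars (\<lambda>_. N) X UNIV"
    and distr_X: "\<And>i. distr M N (X i) = Q"
begin

lemma measurable_X [measurable]: "X i \<in> measurable M N"
  using indep_X unfolding indep_vars_def by auto

lemma sets_Q [measurable_cong]: "sets Q = sets N"
  using distr_X[of 0] by auto

lemma space_Q: "space Q = space N"
  using distr_X[of 0] by auto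

sublocale Q: prob_space Q
  using prob_space_distr[OF measurable_X[of 0]] distr_X[of 0] by simp

lemma integral_X:
  fixes f :: "'b \<Rightarrow> real"
  shows "f \<in> borel_measurable N \<Longrightarrow> expectation (\<lambda>\<omega>. f (X i \<omega>)) = (\<integral>z. f z \<partial>Q)"
  unfolding distr_X[of i, symmetric] by (subst integral_distr) auto

lemma borel_measurable_integrable_Q: "integrable Q f \<Longrightarrow> f \<in> borel_measurable N"
  using borel_measurable_integrable[of Q f] by (simp add: measurable_cong_sets[OF sets_Q refl])

lemma integrable_X:
  fixes f :: "'b \<Rightarrow> real"
  assumes "integrable Q f"
  shows "integrable M (\<lambda>\<omega>. f (X i \<omega>))"
proof -
  have "f \<in> borel_measurable N"
    using assms by (rule borel_measurable_integrable_Q)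
  with assms show ?thesis unfolding distr_X[of i, symmetric] by (subst (asm) integrable_distr_eq) auto
qed

lemma distr_compose_X: "g \<in> measurable N K \<Longrightarrow> distr M K (\<lambda>\<omega>. g (X i \<omega>)) = distr Q K g"
  unfolding distr_X[of i, symmetric] by (subst distr_distr) (auto simp: comp_def)

lemma indep_vars_compose_X:
  "(\<And>i. i \<in> I \<Longrightarrow> f i \<in> borel_measurable N) \<Longrightarrow> indep_vars (\<lambda>_. borel) (\<lambda>i \<omega>. f i (X i \<omega>)) I"
  using indep_vars_compose2[OF indep_vars_subset[OF indep_X], of I f] by auto

lemma prob_mean_ge_le:
  assumes g [measurable]: "g \<in> borel_measurable N"
    and bnd: "\<And>z. z \<in> space N \<Longrightarrow> a \<le> g z \<and> g z \<le> b" and "a < b" and "0 \<le> \<epsilon>" and "0 < n"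
  shows "prob {\<omega>\<in>space M. (\<integral>z. g z \<partial>Q) + \<epsilon> \<le> (\<Sum>i<n. g (X i \<omega>)) / real n}
    \<le> exp (-2 * \<epsilon>\<^sup>2 / (b - a)\<^sup>2) ^ n"
proof -
  interpret Hoeffding_ineq_iid M "{..<n}" "\<lambda>i \<omega>. g (X i \<omega>)" "\<lambda>\<omega>. g (X 0 \<omega>)" a b
    "expectation (\<lambda>\<omega>. g (X 0 \<omega>))"
  proof unfold_locales
    show "AE \<omega> in M. g (X 0 \<omega>) \<in> {a..b}"
      using bnd measurable_space[OF measurable_X] by (intro AE_I2) auto
    show "indep_vars (\<lambda>_. borel) (\<lambda>i \<omega>. g (X i \<omega>)) {..<n}"
      by (rule indep_vars_compose_X) simp
    show "distr M borel (\<lambda>\<omega>. g (X i \<omega>)) = distr M borel (\<lambda>\<omega>. g (X 0 \<omega>))" for i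
      by (simp add: distr_compose_X)
  qed simp_all
  have "exp (-2 * real n * \<epsilon>\<^sup>2 / (b - a)\<^sup>2) = exp (-2 * \<epsilon>\<^sup>2 / (b - a)\<^sup>2) ^ n"
    unfolding exp_of_nat_mult[symmetric] by (simp add: mult_ac)
  moreover have "expectation (\<lambda>\<omega>. g (X 0 \<omega>)) = (\<integral>z. g z \<partial>Q)" by (rule integral_X) simp
  moreover have "prob {\<omega>\<in>space M. (\<Sum>i\<in>{..<n}. g (X i \<omega>)) / real (card {..<n})
      \<ge> expectation (\<lambda>\<omega>. g (X 0 \<omega>)) + \<epsilon>} \<le> exp (-2 * real (card {..<n}) * \<epsilon>\<^sup>2 / (b - a)\<^sup>2)"
    using assms(3-) by (intro Hoeffding_ineq_ge') auto
  ultimately show ?thesis by simp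
qed

lemma AE_eventually_sum_le_of_bounded:
  assumes g [measurable]: "g \<in> borel_measurable N"
    and bnd: "\<And>z. z \<in> space N \<Longrightarrow> a \<le> g z \<and> g z \<le> b" and \<epsilon>: "0 < \<epsilon>"
  shows "AE \<omega> in M. eventually (\<lambda>n. (\<Sum>i<n. g (X i \<omega>)) \<le> real n * ((\<integral>z. g z \<partial>Q) + \<epsilon>)) sequentially"
proof -
  \<comment> \<open>Hoeffding's inequality needs a nondegenerate interval.\<close>
  define b' where "b' = max b (a + 1)"
  have "a < b'" and bnd': "\<And>z. z \<in> space N \<Longrightarrow> a \<le> g z \<and> g z \<le> b'"
    using bnd by (force simp: b'_def)+
  define A where "A n = {\<omega>\<in>space M. (\<integral>z. g z \<partial>Q) + \<epsilon> \<le> (\<Sum>i<n. g (X i \<omega>)) / real n}" for n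
  have [measurable]: "A n \<in> events" for n unfolding A_def by measurable
  have "summable (\<lambda>n. prob (A n))"
  proof (rule summable_comparison_test'[where N=1])
    show "summable (\<lambda>n. exp (-2 * \<epsilon>\<^sup>2 / (b' - a)\<^sup>2) ^ n)"
      using \<epsilon> \<open>a < b'\<close> by (intro summable_geometric) auto
    show "norm (prob (A n)) \<le> exp (-2 * \<epsilon>\<^sup>2 / (b' - a)\<^sup>2) ^ n" if "1 \<le> n" for n
      unfolding A_def using prob_mean_ge_le[OF g bnd' \<open>a < b'\<close>, of \<epsilon> n] \<epsilon> that by simp
  qed
  then have "AE \<omega> in M. eventually (\<lambda>n. \<omega> \<in> space M - A n) sequentially"
    by (intro borel_cantelli_AE1) (auto simp: less_top[symmetric])
  then show ?thesis
  proof (rule AE_mp, intro AE_I2 impI)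
    fix \<omega> assume \<omega>: "\<omega> \<in> space M" and ev: "eventually (\<lambda>n. \<omega> \<in> space M - A n) sequentially"
    from ev eventually_gt_at_top[of 0]
    show "eventually (\<lambda>n. (\<Sum>i<n. g (X i \<omega>)) \<le> real n * ((\<integral>z. g z \<partial>Q) + \<epsilon>)) sequentially"
      by eventually_elim (use \<omega> in \<open>auto simp: A_def not_le pos_divide_less_eq mult.commute\<close>)
  qed
qed

lemma prob_X: "{z\<in>space N. P z} \<in> sets N \<Longrightarrow> prob {\<omega>\<in>space M. P (X i \<omega>)} = measure Q {z\<in>space N. P z}"
  unfolding distr_X[of i, symmetric]
  by (subst measure_distr) (auto intro!: arg_cong[where f=prob] dest: measurable_space[OF measurable_X])

lemma prob_exists_gt_le:
  fixes h :: "'b \<Rightarrow> real"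
  assumes [measurable]: "h \<in> borel_measurable N" and nonneg: "\<And>z. z \<in> space N \<Longrightarrow> 0 \<le> h z"
    and t: "0 < t"
  shows "prob (\<Union>i<k. {\<omega>\<in>space M. t < h (X i \<omega>)}) \<le> real k / t\<^sup>2 * (\<integral>z. (min (h z) t)\<^sup>2 \<partial>Q)"
proof -
  have "integrable Q (\<lambda>z. (min (h z) t)\<^sup>2)"
    by (rule Q.integrable_const_bound[where B="t\<^sup>2"])
      (use nonneg t in \<open>auto simp: space_Q intro!: power_mono\<close>)
  have "prob (\<Union>i<k. {\<omega>\<in>space M. t < h (X i \<omega>)}) \<le> (\<Sum>i<k. prob {\<omega>\<in>space M. t < h (X i \<omega>)})"
    by (rule finite_measure_subadditive_finite) auto
  also have "\<dots> = real k * measure Q {z\<in>space N. t < h z}"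
    using prob_X[of "\<lambda>z. t < h z"] by simp
  also have "measure Q {z\<in>space N. t < h z} \<le> measure Q {z\<in>space Q. t\<^sup>2 \<le> (min (h z) t)\<^sup>2}"
    using t by (intro Q.finite_measure_mono) (auto simp: space_Q)
  also have "\<dots> \<le> (\<integral>z. (min (h z) t)\<^sup>2 \<partial>Q) / t\<^sup>2"
    using t \<open>integrable Q _\<close> by (intro integral_Markov_inequality_measure[where A="space Q"]) auto
  finally show ?thesis by (simp add: mult_left_mono)
qed

lemma prob_sum_deviation_ge_le:
  fixes T :: "'b \<Rightarrow> real"
  assumes [measurable]: "T \<in> borel_measurable N" and bnd: "\<And>z. z \<in> space N \<Longrightarrow> \<bar>T z\<bar> \<le> t"
    and k: "0 < k" and c: "0 < c"
  shows "prob {\<omega>\<in>space M. real k * c \<le> \<bar>(\<Sum>i<k. T (X i \<omega>)) - expectation (\<lambda>\<omega>. \<Sum>i<k. T (X i \<omega>))\<bar>}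
    \<le> (\<integral>z. (T z)\<^sup>2 \<partial>Q) / (real k * c\<^sup>2)"
proof -
  define S where "S \<omega> = (\<Sum>i<k. T (X i \<omega>))" for \<omega>
  have [measurable]: "S \<in> borel_measurable M" unfolding S_def by measurable
  have int_T: "integrable Q T"
  proof (rule Q.integrable_const_bound[where B=t])
    show "AE z in Q. norm (T z) \<le> t" using bnd by (intro AE_I2) (simp add: space_Q)
  qed simp
  have T_sq: "(T z)\<^sup>2 \<le> t\<^sup>2" if "z \<in> space N" for z
    using power_mono[OF bnd[OF that] abs_ge_zero, of 2] by simp
  have int_T2: "integrable Q (\<lambda>z. (T z)\<^sup>2)"
  proof (rule Q.integrable_const_bound[where B="t\<^sup>2"])
    show "AE z in Q. norm ((T z)\<^sup>2) \<le> t\<^sup>2" using T_sq by (intro AE_I2) (simp add: space_Q)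
  qed simp
  have "integrable M (\<lambda>\<omega>. (S \<omega>)\<^sup>2)"
  proof (rule integrable_const_bound[where B="(real k * t)\<^sup>2"])
    have "\<bar>S \<omega>\<bar> \<le> real k * t" if "\<omega> \<in> space M" for \<omega>
    proof -
      have "\<bar>S \<omega>\<bar> \<le> (\<Sum>i<k. \<bar>T (X i \<omega>)\<bar>)" unfolding S_def by (rule sum_abs)
      also have "\<dots> \<le> (\<Sum>i<k. t)" using bnd measurable_space[OF measurable_X that] by (intro sum_mono) auto
      finally show ?thesis by simp
    qed
    then have "(S \<omega>)\<^sup>2 \<le> (real k * t)\<^sup>2" if "\<omega> \<in> space M" for \<omega>
      using power_mono[of "\<bar>S \<omega>\<bar>" "real k * t" 2] that by simp
    then show "AE \<omega> in M. norm ((S \<omega>)\<^sup>2) \<le> (real k * t)\<^sup>2" by (intro AE_I2) simp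
  qed simp
  then have "prob {\<omega>\<in>space M. real k * c \<le> \<bar>S \<omega> - expectation S\<bar>} \<le> variance S / (real k * c)\<^sup>2"
    using c k by (intro Chebyshev_inequality) auto
  also have "variance S = (\<Sum>i<k. variance (\<lambda>\<omega>. T (X i \<omega>)))"
    unfolding S_def using bnd measurable_space[OF measurable_X]
    by (intro variance_sum_indep[where B=t] indep_vars_compose_X) auto
  also have "\<dots> \<le> (\<Sum>i<k. \<integral>z. (T z)\<^sup>2 \<partial>Q)"
    using variance_eq[OF integrable_X[OF int_T] integrable_X[OF int_T2]] integral_X[of "\<lambda>z. (T z)\<^sup>2"]
    by (intro sum_mono) simp
  also have "\<dots> / (real k * c)\<^sup>2 = (\<integral>z. (T z)\<^sup>2 \<partial>Q) / (real k * c\<^sup>2)"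
    using k by (simp add: power2_eq_square)
  finally show ?thesis unfolding S_def by (simp add: divide_right_mono)
qed

lemma prob_sum_gt_le:
  fixes h :: "'b \<Rightarrow> real"
  assumes h [measurable]: "h \<in> borel_measurable N" and nonneg: "\<And>z. z \<in> space N \<Longrightarrow> 0 \<le> h z"
    and int_h: "integrable Q h" and c: "0 < c" and t: "0 < t" and k: "0 < k"
  shows "prob {\<omega>\<in>space M. real k * ((\<integral>z. h z \<partial>Q) + c) < (\<Sum>i<k. h (X i \<omega>))}
    \<le> (real k / t\<^sup>2 + 1 / (real k * c\<^sup>2)) * (\<integral>z. (min (h z) t)\<^sup>2 \<partial>Q)"
proof -
  define T where "T z = min (h z) t" for z
  have [measurable]: "T \<in> borel_measurable N" unfolding T_def by measurable
  define S where "S \<omega> = (\<Sum>i<k. T (X i \<omega>))" for \<omega>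
  define B1 where "B1 = (\<Union>i<k. {\<omega>\<in>space M. t < h (X i \<omega>)})"
  define B2 where "B2 = {\<omega>\<in>space M. real k * c \<le> \<bar>S \<omega> - expectation S\<bar>}"
  have [measurable]: "B1 \<in> events" "B2 \<in> events" unfolding B1_def B2_def S_def by measurable
  have "integrable Q T"
    by (rule Q.integrable_const_bound[where B=t]) (use nonneg t in \<open>auto simp: space_Q T_def\<close>)
  then have "expectation S = real k * (\<integral>z. T z \<partial>Q)"
    unfolding S_def using integrable_X by (simp add: Bochner_Integration.integral_sum integral_X)
  also have "(\<integral>z. T z \<partial>Q) \<le> (\<integral>z. h z \<partial>Q)"
    using \<open>integrable Q T\<close> int_h by (intro integral_mono) (auto simp: T_def)
  finally have ES_le: "expectation S \<le> real k * (\<integral>z. h z \<partial>Q)" by (simp add: mult_left_mono)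
  \<comment> \<open>Off B1 nothing is truncated, so a large sum is a large deviation of the truncated sum.\<close>
  have "{\<omega>\<in>space M. real k * ((\<integral>z. h z \<partial>Q) + c) < (\<Sum>i<k. h (X i \<omega>))} \<subseteq> B1 \<union> B2"
  proof
    fix \<omega> assume "\<omega> \<in> {\<omega>\<in>space M. real k * ((\<integral>z. h z \<partial>Q) + c) < (\<Sum>i<k. h (X i \<omega>))}"
    then have \<omega>: "\<omega> \<in> space M" and gt: "real k * ((\<integral>z. h z \<partial>Q) + c) < (\<Sum>i<k. h (X i \<omega>))"
      by auto
    show "\<omega> \<in> B1 \<union> B2"
    proof (cases "\<omega> \<in> B1")
      case False
      then have "S \<omega> = (\<Sum>i<k. h (X i \<omega>))"
        unfolding S_def T_def B1_def using \<omega> by (intro sum.cong) (auto simp: min_def not_less)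
      with gt ES_le have "real k * c \<le> \<bar>S \<omega> - expectation S\<bar>" by (simp add: algebra_simps)
      then show ?thesis using \<omega> by (simp add: B2_def)
    qed simp
  qed
  then have "prob {\<omega>\<in>space M. real k * ((\<integral>z. h z \<partial>Q) + c) < (\<Sum>i<k. h (X i \<omega>))} \<le> prob B1 + prob B2"
    by (intro order.trans[OF finite_measure_mono measure_Un_le]) auto
  moreover have "prob B1 \<le> real k / t\<^sup>2 * (\<integral>z. (min (h z) t)\<^sup>2 \<partial>Q)"
    unfolding B1_def using nonneg t by (intro prob_exists_gt_le) auto
  moreover have "prob B2 \<le> (\<integral>z. (T z)\<^sup>2 \<partial>Q) / (real k * c\<^sup>2)"
    unfolding B2_def S_def using nonneg t k c by (intro prob_sum_deviation_ge_le[where t=t]) (auto simp: T_def)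
  ultimately show ?thesis by (simp add: T_def algebra_simps)
qed

lemma AE_eventually_sum_le_of_nonneg:
  fixes h :: "'b \<Rightarrow> real"
  assumes h [measurable]: "h \<in> borel_measurable N" and nonneg: "\<And>z. z \<in> space N \<Longrightarrow> 0 \<le> h z"
    and int_h: "integrable Q h" and c: "0 < c"
  shows "AE \<omega> in M. eventually (\<lambda>n. (\<Sum>i<n. h (X i \<omega>)) \<le> 2 * real n * ((\<integral>z. h z \<partial>Q) + c)) sequentially"
proof -
  define E where "E = (\<integral>z. h z \<partial>Q)"
  have "0 \<le> E" unfolding E_def using nonneg by (intro integral_nonneg_AE) (auto simp: space_Q)
  define a where "a m = (\<integral>z. (min (h z) (2^m))\<^sup>2 / 2^m \<partial>Q)" for m :: nat
  have "summable a"
    unfolding a_def using nonneg int_h by (intro Q.summable_truncated_second_moments) (auto simp: space_Q)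
  define A where "A m = {\<omega>\<in>space M. real (2^m) * (E + c) < (\<Sum>i<2^m. h (X i \<omega>))}" for m :: nat
  have [measurable]: "A m \<in> events" for m unfolding A_def by measurable
  have "prob (A m) \<le> (1 + 1 / c\<^sup>2) * a m" for m
  proof -
    have "prob (A m) \<le> (real (2^m) / (2^m)\<^sup>2 + 1 / (real (2^m) * c\<^sup>2)) * (\<integral>z. (min (h z) (2^m))\<^sup>2 \<partial>Q)"
      unfolding A_def E_def using nonneg int_h c by (intro prob_sum_gt_le) auto
    also have "\<dots> = (1 + 1 / c\<^sup>2) * a m"
      unfolding a_def by (simp add: power2_eq_square field_simps)
    finally show ?thesis .
  qed
  then have "summable (\<lambda>m. prob (A m))"
    by (intro summable_comparison_test'[OF summable_mult[OF \<open>summable a\<close>]]) auto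
  then have "AE \<omega> in M. eventually (\<lambda>m. \<omega> \<in> space M - A m) sequentially"
    by (intro borel_cantelli_AE1) (auto simp: less_top[symmetric])
  then show ?thesis
  proof (rule AE_mp, intro AE_I2 impI)
    fix \<omega> assume \<omega>: "\<omega> \<in> space M" and "eventually (\<lambda>m. \<omega> \<in> space M - A m) sequentially"
    then have "eventually (\<lambda>m. (\<Sum>i<2^m. h (X i \<omega>)) \<le> 2^m * (E + c)) sequentially"
      by (auto simp: A_def not_less elim: eventually_mono)
    with \<open>0 \<le> E\<close> c show "eventually (\<lambda>n. (\<Sum>i<n. h (X i \<omega>)) \<le> 2 * real n * ((\<integral>z. h z \<partial>Q) + c)) sequentially"
      unfolding E_def using nonneg measurable_space[OF measurable_X \<omega>]
      by (intro eventually_sum_le_of_dyadic) auto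
  qed
qed

lemma AE_eventually_sum_le:
  fixes f :: "'b \<Rightarrow> real"
  assumes int_f: "integrable Q f" and \<epsilon>: "0 < \<epsilon>"
  shows "AE \<omega> in M. eventually (\<lambda>n. (\<Sum>i<n. f (X i \<omega>)) \<le> real n * ((\<integral>z. f z \<partial>Q) + \<epsilon>)) sequentially"
proof -
  have [measurable]: "f \<in> borel_measurable N" using int_f by (rule borel_measurable_integrable_Q)
  \<comment> \<open>Truncate at a level j whose excess H j has small mean: the truncation is handled by
    Hoeffding's inequality, the nonnegative excess by the dyadic bound.\<close>
  define H where "H j z = max (\<bar>f z\<bar> - real j) 0" for j :: nat and z
  have [measurable]: "H j \<in> borel_measurable N" for j unfolding H_def by measurable
  have int_H: "integrable Q (H j)" for j
    using int_f by (intro Bochner_Integration.integrable_bound[OF integrable_abs[OF int_f]]) (auto simp: H_def)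
  have "eventually (\<lambda>j. (\<integral>z. H j z \<partial>Q) < \<epsilon> / 10) sequentially"
    unfolding H_def using \<epsilon> by (intro order_tendstoD(2)[OF tendsto_integral_excess_0[OF int_f]]) auto
  then obtain j where j: "(\<integral>z. H j z \<partial>Q) < \<epsilon> / 10"
    unfolding eventually_sequentially by auto
  define g where "g z = max (min (f z) (real j)) (- real j)" for z
  have [measurable]: "g \<in> borel_measurable N" unfolding g_def by measurable
  have f_le: "f z \<le> g z + H j z" for z unfolding g_def H_def by auto
  have "integrable Q g"
    by (intro Bochner_Integration.integrable_bound[OF integrable_abs[OF int_f]]) (auto simp: g_def)
  then have "(\<integral>z. g z \<partial>Q) \<le> (\<integral>z. f z + H j z \<partial>Q)"
    using int_f int_H by (intro integral_mono) (auto simp: g_def H_def)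
  then have int_g: "(\<integral>z. g z \<partial>Q) \<le> (\<integral>z. f z \<partial>Q) + (\<integral>z. H j z \<partial>Q)"
    using int_f int_H by simp
  have "0 \<le> (\<integral>z. H j z \<partial>Q)" by (intro integral_nonneg_AE) (auto simp: H_def)
  have "AE \<omega> in M. eventually (\<lambda>n. (\<Sum>i<n. g (X i \<omega>)) \<le> real n * ((\<integral>z. g z \<partial>Q) + \<epsilon> / 2)) sequentially"
    using \<epsilon> by (intro AE_eventually_sum_le_of_bounded[where a="- real j" and b="real j"]) (auto simp: g_def)
  moreover have "AE \<omega> in M. eventually (\<lambda>n. (\<Sum>i<n. H j (X i \<omega>))
      \<le> 2 * real n * ((\<integral>z. H j z \<partial>Q) + \<epsilon> / 10)) sequentially"
    using \<epsilon> by (intro AE_eventually_sum_le_of_nonneg[OF _ _ int_H]) (auto simp: H_def)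
  ultimately show ?thesis
  proof eventually_elim
    case (elim \<omega>)
    then show ?case
    proof eventually_elim
      case (elim n)
      have "(\<Sum>i<n. f (X i \<omega>)) \<le> (\<Sum>i<n. g (X i \<omega>)) + (\<Sum>i<n. H j (X i \<omega>))"
        unfolding sum.distrib[symmetric] by (intro sum_mono f_le)
      also have "\<dots> \<le> real n * ((\<integral>z. g z \<partial>Q) + \<epsilon> / 2 + 2 * ((\<integral>z. H j z \<partial>Q) + \<epsilon> / 10))"
        using elim by (simp add: algebra_simps)
      also have "\<dots> \<le> real n * ((\<integral>z. f z \<partial>Q) + \<epsilon>)"
        using int_g j \<open>0 \<le> (\<integral>z. H j z \<partial>Q)\<close> by (intro mult_left_mono) auto
      finally show ?case .
    qed
  qed
qed

lemma AE_eventually_sum_le_near: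
  fixes F :: "'p::metric_space \<Rightarrow> 'b \<Rightarrow> real"
  assumes "compact T"
    and meas: "\<And>\<theta>. \<theta> \<in> T \<Longrightarrow> F \<theta> \<in> borel_measurable N"
    and cont: "\<And>z. z \<in> space N \<Longrightarrow> continuous_on T (\<lambda>\<theta>. F \<theta> z)"
    and "integrable Q G" and bound: "\<And>\<theta> z. \<theta> \<in> T \<Longrightarrow> z \<in> space N \<Longrightarrow> \<bar>F \<theta> z\<bar> \<le> G z"
    and "\<theta>0 \<in> T" and less: "(\<integral>z. F \<theta>0 z \<partial>Q) < c"
  shows "\<exists>r>0. AE \<omega> in M. eventually (\<lambda>n. \<forall>\<theta>\<in>T \<inter> ball \<theta>0 r. (\<Sum>i<n. F \<theta> (X i \<omega>)) \<le> real n * c) sequentially"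
proof -
  obtain r W where "0 < r" "integrable Q W" "(\<integral>z. W z \<partial>Q) < c"
    and W_ge: "\<And>\<theta> z. \<theta> \<in> T \<Longrightarrow> dist \<theta>0 \<theta> < r \<Longrightarrow> z \<in> space N \<Longrightarrow> F \<theta> z \<le> W z"
  proof -
    have "F \<theta> \<in> borel_measurable Q" if "\<theta> \<in> T" for \<theta>
      using meas[OF that] by (simp add: measurable_cong_sets[OF sets_Q refl])
    then show ?thesis
      using local_integrable_majorant[of T F Q G \<theta>0 c] assms that by (auto simp: space_Q)
  qed
  then have "AE \<omega> in M. eventually (\<lambda>n. (\<Sum>i<n. W (X i \<omega>)) \<le> real n * c) sequentially"
    using AE_eventually_sum_le[of W "c - (\<integral>z. W z \<partial>Q)"] by simp
  then have "AE \<omega> in M. eventually (\<lambda>n. \<forall>\<theta>\<in>T \<inter> ball \<theta>0 r. (\<Sum>i<n. F \<theta> (X i \<omega>)) \<le> real n * c) sequentially"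
  proof (rule AE_mp, intro AE_I2 impI)
    fix \<omega> assume \<omega>: "\<omega> \<in> space M"
    assume "eventually (\<lambda>n. (\<Sum>i<n. W (X i \<omega>)) \<le> real n * c) sequentially"
    then show "eventually (\<lambda>n. \<forall>\<theta>\<in>T \<inter> ball \<theta>0 r. (\<Sum>i<n. F \<theta> (X i \<omega>)) \<le> real n * c) sequentially"
    proof (elim eventually_mono, intro ballI)
      fix n \<theta> assume sum_W: "(\<Sum>i<n. W (X i \<omega>)) \<le> real n * c" and \<theta>: "\<theta> \<in> T \<inter> ball \<theta>0 r"
      have "(\<Sum>i<n. F \<theta> (X i \<omega>)) \<le> (\<Sum>i<n. W (X i \<omega>))"
        using \<theta> \<omega> by (intro sum_mono W_ge measurable_space[OF measurable_X]) (auto simp: mem_ball)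
      with sum_W show "(\<Sum>i<n. F \<theta> (X i \<omega>)) \<le> real n * c" by linarith
    qed
  qed
  with \<open>0 < r\<close> show ?thesis by blast
qed

lemma AE_eventually_uniform_sum_le:
  fixes F :: "'p::metric_space \<Rightarrow> 'b \<Rightarrow> real"
  assumes "compact T"
    and meas: "\<And>\<theta>. \<theta> \<in> T \<Longrightarrow> F \<theta> \<in> borel_measurable N"
    and cont: "\<And>z. z \<in> space N \<Longrightarrow> continuous_on T (\<lambda>\<theta>. F \<theta> z)"
    and "integrable Q G" and bound: "\<And>\<theta> z. \<theta> \<in> T \<Longrightarrow> z \<in> space N \<Longrightarrow> \<bar>F \<theta> z\<bar> \<le> G z"
    and less: "\<And>\<theta>. \<theta> \<in> T \<Longrightarrow> (\<integral>z. F \<theta> z \<partial>Q) < c"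
  shows "AE \<omega> in M. eventually (\<lambda>n. \<forall>\<theta>\<in>T. (\<Sum>i<n. F \<theta> (X i \<omega>)) \<le> real n * c) sequentially"
proof -
  have "\<forall>\<theta>0\<in>T. \<exists>r>0. AE \<omega> in M. eventually (\<lambda>n.
      \<forall>\<theta>\<in>T \<inter> ball \<theta>0 r. (\<Sum>i<n. F \<theta> (X i \<omega>)) \<le> real n * c) sequentially"
    using AE_eventually_sum_le_near[OF assms(1-5) _ less] by blast
  then obtain r where r: "\<forall>\<theta>0\<in>T. 0 < r \<theta>0 \<and> (AE \<omega> in M. eventually (\<lambda>n.
      \<forall>\<theta>\<in>T \<inter> ball \<theta>0 (r \<theta>0). (\<Sum>i<n. F \<theta> (X i \<omega>)) \<le> real n * c) sequentially)"
    by (rule bchoice[elim_format]) blast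
  obtain S where S: "S \<subseteq> T" "finite S" "T \<subseteq> (\<Union>\<theta>0\<in>S. ball \<theta>0 (r \<theta>0))"
    using compactE_image[OF \<open>compact T\<close>, of T "\<lambda>\<theta>0. ball \<theta>0 (r \<theta>0)"] r by force
  have "AE \<omega> in M. \<forall>\<theta>0\<in>S. eventually (\<lambda>n.
      \<forall>\<theta>\<in>T \<inter> ball \<theta>0 (r \<theta>0). (\<Sum>i<n. F \<theta> (X i \<omega>)) \<le> real n * c) sequentially"
    using S r by (intro AE_finite_allI) blast+
  then show ?thesis
  proof (rule eventually_mono)
    fix \<omega> assume "\<forall>\<theta>0\<in>S. eventually (\<lambda>n.
      \<forall>\<theta>\<in>T \<inter> ball \<theta>0 (r \<theta>0). (\<Sum>i<n. F \<theta> (X i \<omega>)) \<le> real n * c) sequentially"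
    then have "eventually (\<lambda>n. \<forall>\<theta>0\<in>S.
      \<forall>\<theta>\<in>T \<inter> ball \<theta>0 (r \<theta>0). (\<Sum>i<n. F \<theta> (X i \<omega>)) \<le> real n * c) sequentially"
      by (rule eventually_ball_finite[OF S(2)])
    then show "eventually (\<lambda>n. \<forall>\<theta>\<in>T. (\<Sum>i<n. F \<theta> (X i \<omega>)) \<le> real n * c) sequentially"
      by (elim eventually_mono) (use S(3) in blast)
  qed
qed

end

section \<open>Log-likelihood ratios of densities\<close>

lemma density_ratio_dens_measure:
  fixes p q :: "'z \<Rightarrow> real"
  assumes [measurable]: "p \<in> borel_measurable mu" "q \<in> borel_measurable mu"
    and pos: "\<And>z. 0 < p z" "\<And>z. 0 < q z"
  shows "density (dens_measure mu p) (\<lambda>z. q z / p z) = dens_measure mu q"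
proof -
  have "p z \<noteq> 0" for z using pos(1)[of z] by simp
  then show ?thesis
    unfolding dens_measure_def using pos by (intro density_density_divide) (auto simp: less_imp_le)
qed

lemma KL_divergence_dens_measure:
  fixes mu :: "'z measure" and p q :: "'z \<Rightarrow> real"
  defines "P \<equiv> dens_measure mu p" and "Q \<equiv> dens_measure mu q"
  assumes [measurable]: "p \<in> borel_measurable mu" "q \<in> borel_measurable mu"
    and pos: "\<And>z. 0 < p z" "\<And>z. 0 < q z" and "prob_space P"
    and int: "integrable Q (\<lambda>z. ln (p z) - ln (q z))"
  shows "absolutely_continuous P Q"
    and "integrable Q (\<lambda>z. ln (enn2real (RN_deriv P Q z)))"
    and "KL_divergence (exp 1) P Q = - (\<integral>z. ln (p z) - ln (q z) \<partial>Q)"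
proof -
  interpret P: prob_space P by fact
  have sets_P: "sets P = sets mu" and sets_Q: "sets Q = sets mu" by (simp_all add: P_def Q_def dens_measure_def)
  have Q_eq: "density P (\<lambda>z. q z / p z) = Q"
    unfolding P_def Q_def using pos by (intro density_ratio_dens_measure) auto
  have ratio_meas: "(\<lambda>z. q z / p z) \<in> borel_measurable P"
    by (simp add: measurable_cong_sets[OF sets_P refl])
  then show "absolutely_continuous P Q"
    unfolding Q_eq[symmetric] by (intro absolutely_continuousI_density) simp
  have "AE z in P. ennreal (q z / p z) = RN_deriv P Q z"
    using Q_eq ratio_meas by (intro P.RN_deriv_unique) simp_all
  then have "AE z in Q. ennreal (q z / p z) = RN_deriv P Q z"
    unfolding Q_eq[symmetric] using ratio_meas by (subst AE_density) (auto elim: AE_mp)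
  then have ln_RN: "AE z in Q. ln (enn2real (RN_deriv P Q z)) = - (ln (p z) - ln (q z))"
  proof (rule AE_mp, intro AE_I2 impI)
    fix z assume "ennreal (q z / p z) = RN_deriv P Q z"
    from this[symmetric] show "ln (enn2real (RN_deriv P Q z)) = - (ln (p z) - ln (q z))"
      using pos[of z] by (simp add: ln_div less_imp_le)
  qed
  have meas_RN: "(\<lambda>z. ln (enn2real (RN_deriv P Q z))) \<in> borel_measurable Q"
    using borel_measurable_RN_deriv[of P Q] by (simp add: measurable_cong_sets[OF sets_Q refl] measurable_cong_sets[OF sets_P refl])
  have meas_ln: "(\<lambda>z. - (ln (p z) - ln (q z))) \<in> borel_measurable Q"
    by (simp add: measurable_cong_sets[OF sets_Q refl])
  show "integrable Q (\<lambda>z. ln (enn2real (RN_deriv P Q z)))"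
    using integrable_minus[OF int] by (subst integrable_cong_AE[OF meas_RN meas_ln ln_RN])
  have "KL_divergence (exp 1) P Q = (\<integral>z. ln (enn2real (RN_deriv P Q z)) \<partial>Q)"
    unfolding KL_divergence_def entropy_density_def by (simp add: log_def comp_def)
  also have "\<dots> = - (\<integral>z. ln (p z) - ln (q z) \<partial>Q)"
    using integral_cong_AE[OF meas_RN meas_ln ln_RN]
      Bochner_Integration.integral_minus[of Q "\<lambda>z. ln (p z) - ln (q z)"] by simp
  finally show "KL_divergence (exp 1) P Q = - (\<integral>z. ln (p z) - ln (q z) \<partial>Q)" .
qed

lemma KL_dens_measure:
  fixes mu :: "'z measure" and p q :: "'z \<Rightarrow> real"
  assumes "p \<in> borel_measurable mu" "q \<in> borel_measurable mu"
    and "\<And>z. 0 < p z" "\<And>z. 0 < q z" and "prob_space (dens_measure mu p)"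
    and "integrable (dens_measure mu q) (\<lambda>z. ln (p z) - ln (q z))"
  shows "KL (dens_measure mu q) (dens_measure mu p)
    = ereal (- (\<integral>z. ln (p z) - ln (q z) \<partial>dens_measure mu q))"
  using KL_divergence_dens_measure[OF assms] unfolding KL_def by simp

lemma integral_log_density_ratio_less_0_iff:
  fixes mu :: "'z measure" and p q :: "'z \<Rightarrow> real"
  defines "P \<equiv> dens_measure mu p" and "Q \<equiv> dens_measure mu q"
  assumes [measurable]: "p \<in> borel_measurable mu" "q \<in> borel_measurable mu"
    and pos: "\<And>z. 0 < p z" "\<And>z. 0 < q z" and "prob_space P" "prob_space Q"
    and int: "integrable Q (\<lambda>z. ln (p z) - ln (q z))"
  shows "(\<integral>z. ln (p z) - ln (q z) \<partial>Q) < 0 \<longleftrightarrow> P \<noteq> Q"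
proof -
  interpret information_space P "exp 1"
    using \<open>prob_space P\<close> by (intro information_space.intro) (simp_all add: information_space_axioms_def)
  have KL_eq: "KL_divergence (exp 1) P Q = - (\<integral>z. ln (p z) - ln (q z) \<partial>Q)"
    unfolding P_def Q_def using assms(5-) by (intro KL_divergence_dens_measure) (simp_all add: P_def Q_def)
  have sets_P: "sets P = sets mu" by (simp add: P_def dens_measure_def)
  have [measurable]: "(\<lambda>z. q z / p z) \<in> borel_measurable P"
    by (simp add: measurable_cong_sets[OF sets_P refl])
  have Q_eq: "density P (\<lambda>z. q z / p z) = Q"
    unfolding P_def Q_def using pos by (intro density_ratio_dens_measure) auto
  show ?thesis
  proof
    assume "(\<integral>z. ln (p z) - ln (q z) \<partial>Q) < 0"
    then show "P \<noteq> Q" using KL_eq KL_same_eq_0[of "exp 1"] by auto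
  next
    assume "P \<noteq> Q"
    have "(\<lambda>z. ln (q z / p z)) = (\<lambda>z. - (ln (p z) - ln (q z)))"
      using pos by (simp add: ln_div less_imp_neq[THEN not_sym])
    then have "integrable Q (\<lambda>z. ln (q z / p z))"
      using integrable_minus[OF int] by simp
    then have "integrable P (\<lambda>z. q z / p z * log (exp 1) (q z / p z))"
      unfolding Q_eq[symmetric] using pos
      by (subst (asm) integrable_density) (auto simp: log_def less_imp_le measurable_cong_sets[OF sets_P refl])
    then have "0 < KL_divergence (exp 1) P (density P (\<lambda>z. q z / p z))"
      using \<open>P \<noteq> Q\<close> \<open>prob_space Q\<close> pos by (intro KL_gt_0) (auto simp: Q_eq less_imp_le)
    then show "(\<integral>z. ln (p z) - ln (q z) \<partial>Q) < 0" using KL_eq Q_eq by simp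
  qed
qed

section \<open>Penalized likelihood criteria\<close>

lemma le_crit:
  assumes "\<theta> \<in> Theta K"
  shows "ereal ((\<Sum>i<n. ln (p \<theta> (Z i \<omega>))) - pen n K) \<le> crit p Theta pen Z n K \<omega>"
proof -
  have "ereal (\<Sum>i<n. ln (p \<theta> (Z i \<omega>))) \<le> (SUP \<theta>\<in>Theta K. ereal (\<Sum>i<n. ln (p \<theta> (Z i \<omega>))))"
    using assms by (rule SUP_upper)
  then show ?thesis unfolding crit_def
    by (cases "SUP \<theta>\<in>Theta K. ereal (\<Sum>i<n. ln (p \<theta> (Z i \<omega>)))") auto
qed

lemma crit_le:
  assumes "\<And>\<theta>. \<theta> \<in> Theta K \<Longrightarrow> (\<Sum>i<n. ln (p \<theta> (Z i \<omega>))) \<le> B"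
  shows "crit p Theta pen Z n K \<omega> \<le> ereal (B - pen n K)"
proof -
  have "(SUP \<theta>\<in>Theta K. ereal (\<Sum>i<n. ln (p \<theta> (Z i \<omega>)))) \<le> ereal B"
    using assms by (intro SUP_least) auto
  then show ?thesis unfolding crit_def
    by (cases "SUP \<theta>\<in>Theta K. ereal (\<Sum>i<n. ln (p \<theta> (Z i \<omega>)))") auto
qed

lemma crit_less_of_log_ratio_bounds:
  fixes q :: "'z \<Rightarrow> real"
  assumes "\<theta>' \<in> Theta K'"
    and upper: "\<forall>\<theta>\<in>Theta K. (\<Sum>i<n. ln (p \<theta> (Z i \<omega>)) - ln (q (Z i \<omega>))) \<le> real n * c"
    and lower: "real n * c' \<le> (\<Sum>i<n. ln (p \<theta>' (Z i \<omega>)) - ln (q (Z i \<omega>)))"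
    and pen: "pen n K' - pen n K < (c' - c) * real n"
  shows "crit p Theta pen Z n K \<omega> < crit p Theta pen Z n K' \<omega>"
proof -
  define L where "L = (\<Sum>i<n. ln (q (Z i \<omega>)))"
  have sum_split: "(\<Sum>i<n. ln (p \<theta> (Z i \<omega>))) = L + (\<Sum>i<n. ln (p \<theta> (Z i \<omega>)) - ln (q (Z i \<omega>)))" for \<theta>
    unfolding L_def by (simp add: sum_subtractf)
  have "crit p Theta pen Z n K \<omega> \<le> ereal (L + real n * c - pen n K)"
    using upper by (intro crit_le) (auto simp: sum_split)
  also have "\<dots> < ereal (L + real n * c' - pen n K')"
    using pen by (simp add: algebra_simps)
  also have "\<dots> \<le> ereal ((\<Sum>i<n. ln (p \<theta>' (Z i \<omega>))) - pen n K')"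
    using lower by (simp add: sum_split)
  also have "\<dots> \<le> crit p Theta pen Z n K' \<omega>" using \<open>\<theta>' \<in> Theta K'\<close> by (rule le_crit)
  finally show ?thesis .
qed

lemma KhatL_ge:
  assumes "\<forall>K\<in>{1..<Kstar}. crit p Theta pen Z n K \<omega> < crit p Theta pen Z n (Suc K) \<omega>"
  shows "enat Kstar \<le> KhatL p Theta pen Z n \<omega>"
  unfolding KhatL_def
proof (rule Inf_greatest, clarify)
  fix K assume "1 \<le> K" "crit p Theta pen Z n (Suc K) \<omega> \<le> crit p Theta pen Z n K \<omega>"
  with assms show "enat Kstar \<le> enat K" by (auto simp: not_less[symmetric])
qed

lemma KhatG_ge:
  assumes "1 \<le> Kstar" and less: "\<forall>K\<in>{1..<Kstar}. crit p Theta pen Z n K \<omega> < crit p Theta pen Z n Kstar \<omega>"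
  shows "enat Kstar \<le> KhatG p Theta pen Z n \<omega>"
proof -
  let ?is_max = "\<lambda>K. 1 \<le> K \<and> (\<forall>K'\<ge>1. crit p Theta pen Z n K' \<omega> \<le> crit p Theta pen Z n K \<omega>)"
  have "Kstar \<le> K" if "?is_max K" for K
    using that less \<open>1 \<le> Kstar\<close> by (meson atLeastLessThan_iff leD not_le_imp_less)
  then show ?thesis
    unfolding KhatG_def by (auto intro: LeastI2_ex)
qed

section \<open>Nested parametric density models\<close>

text \<open>The standing assumptions (A1)-(A3), imposed on Theta K for K \<ge> 1 only: Theta 0 is irrelevant
  because model_class _ _ _ 0 = {}.\<close>

locale nested_density_model = iid_sequence M borel Z "dens_measure mu pstar"
  for M :: "'w measure" and Z :: "nat \<Rightarrow> 'w \<Rightarrow> 'z::topological_space"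
    and mu :: "'z measure" and pstar :: "'z \<Rightarrow> real" +
  fixes p :: "'p::metric_space \<Rightarrow> 'z \<Rightarrow> real" and Theta :: "nat \<Rightarrow> 'p set" and l u :: "'z \<Rightarrow> real"
  assumes sets_mu: "sets mu = sets borel"
    and measurable_pstar: "pstar \<in> borel_measurable mu"
    and measurable_p: "\<And>K \<theta>. 1 \<le> K \<Longrightarrow> \<theta> \<in> Theta K \<Longrightarrow> p \<theta> \<in> borel_measurable mu"
    and prob_space_p: "\<And>K \<theta>. 1 \<le> K \<Longrightarrow> \<theta> \<in> Theta K \<Longrightarrow> prob_space (dens_measure mu (p \<theta>))"
    and nested: "\<And>K. 1 \<le> K \<Longrightarrow> Theta K \<subseteq> Theta (Suc K)"
    and compact_Theta: "\<And>K. 1 \<le> K \<Longrightarrow> compact (Theta K)"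
    and continuous_ln_p: "\<And>K z. 1 \<le> K \<Longrightarrow> continuous_on (Theta K) (\<lambda>\<theta>. ln (p \<theta> z))"
    and integrable_envelope: "integrable (dens_measure mu pstar) (\<lambda>z. u z - l z)"
    and pstar_bounds: "\<And>z. 0 < pstar z \<and> l z \<le> ln (pstar z) \<and> ln (pstar z) \<le> u z"
    and p_bounds: "\<And>K \<theta> z. 1 \<le> K \<Longrightarrow> \<theta> \<in> Theta K \<Longrightarrow> 0 < p \<theta> z \<and> l z \<le> ln (p \<theta> z) \<and> ln (p \<theta> z) \<le> u z"
begin

abbreviation Pstar :: "'z measure" where "Pstar \<equiv> dens_measure mu pstar"

abbreviation log_ratio :: "'p \<Rightarrow> 'z \<Rightarrow> real" where "log_ratio \<theta> z \<equiv> ln (p \<theta> z) - ln (pstar z)"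

abbreviation expected_log_ratio :: "'p \<Rightarrow> real" where
  "expected_log_ratio \<theta> \<equiv> \<integral>z. log_ratio \<theta> z \<partial>Pstar"

lemma measurable_log_ratio [measurable]:
  assumes "1 \<le> K" "\<theta> \<in> Theta K"
  shows "log_ratio \<theta> \<in> borel_measurable borel"
  using measurable_p[OF assms] measurable_pstar by (simp add: measurable_cong_sets[OF sets_mu refl])

lemma abs_log_ratio_le:
  assumes "1 \<le> K" "\<theta> \<in> Theta K"
  shows "\<bar>log_ratio \<theta> z\<bar> \<le> u z - l z"
  using p_bounds[OF assms, of z] pstar_bounds[of z] by linarith

lemma integrable_log_ratio:
  assumes "1 \<le> K" "\<theta> \<in> Theta K"
  shows "integrable Pstar (log_ratio \<theta>)"
proof (rule Bochner_Integration.integrable_bound[OF integrable_envelope])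
  show "AE z in Pstar. norm (log_ratio \<theta> z) \<le> norm (u z - l z)"
    using abs_log_ratio_le[OF assms] by (intro AE_I2) (auto intro: order.trans[OF _ abs_ge_self])
qed (use assms in simp)

lemma continuous_expected_log_ratio:
  assumes "1 \<le> K"
  shows "continuous_on (Theta K) expected_log_ratio"
  using assms integrable_envelope abs_log_ratio_le continuous_ln_p
  by (intro continuous_on_integral_dominated[where G="\<lambda>z. u z - l z"] continuous_on_diff) auto

lemma expected_log_ratio_less_0_iff:
  assumes "1 \<le> K" "\<theta> \<in> Theta K"
  shows "expected_log_ratio \<theta> < 0 \<longleftrightarrow> dens_measure mu (p \<theta>) \<noteq> Pstar"
  using measurable_p[OF assms] measurable_pstar p_bounds[OF assms] pstar_bounds prob_space_p[OF assms]
    Q.prob_space_axioms integrable_log_ratio[OF assms]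
  by (intro integral_log_density_ratio_less_0_iff) auto

lemma KL_set_model_class:
  assumes "1 \<le> K"
  shows "KL_set Pstar (model_class mu p Theta K) = (INF \<theta>\<in>Theta K. ereal (- expected_log_ratio \<theta>))"
proof -
  have "KL Pstar (dens_measure mu (p \<theta>)) = ereal (- expected_log_ratio \<theta>)" if "\<theta> \<in> Theta K" for \<theta>
    using measurable_p[OF assms that] measurable_pstar p_bounds[OF assms that] pstar_bounds
      prob_space_p[OF assms that] integrable_log_ratio[OF assms that]
    by (intro KL_dens_measure) auto
  then show ?thesis
    using assms unfolding KL_set_def model_class_def by (simp add: image_image)
qed

lemma model_class_mono:
  assumes "1 \<le> K" "K \<le> K'"
  shows "model_class mu p Theta K \<subseteq> model_class mu p Theta K'"
proof -
  have "Theta K \<subseteq> Theta K'"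
    using assms(2)
  proof (induction K' rule: dec_induct)
    case (step n)
    then show ?case using nested[of n] assms(1) by auto
  qed simp
  then show ?thesis using assms by (auto simp: model_class_def)
qed

lemma AE_eventually_crit_less:
  assumes K: "1 \<le> K" and K': "1 \<le> K'" "\<theta>1 \<in> Theta K'"
    and less: "\<And>\<theta>. \<theta> \<in> Theta K \<Longrightarrow> expected_log_ratio \<theta> < expected_log_ratio \<theta>1"
    and pen_pos: "\<And>n. 0 < pen n K" and pen_small: "(\<lambda>n. pen n K' / real n) \<longlonglongrightarrow> 0"
  shows "AE \<omega> in M. eventually (\<lambda>n. crit p Theta pen Z n K \<omega> < crit p Theta pen Z n K' \<omega>) sequentially"
proof -
  obtain c where c: "c < expected_log_ratio \<theta>1" "\<And>\<theta>. \<theta> \<in> Theta K \<Longrightarrow> expected_log_ratio \<theta> < c"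
    using compact_continuous_less_gap[OF compact_Theta[OF K] continuous_expected_log_ratio[OF K] less] by blast
  define c' where "c' = (c + expected_log_ratio \<theta>1) / 2"
  have c': "c < c'" "c' < expected_log_ratio \<theta>1" using c(1) by (simp_all add: c'_def)
  have pen_less: "eventually (\<lambda>n. pen n K' < (c' - c) * real n) sequentially"
  proof -
    have "eventually (\<lambda>n. pen n K' / real n < c' - c) sequentially"
      using c' by (intro order_tendstoD(2)[OF pen_small]) simp
    with eventually_gt_at_top[of 0] show ?thesis
      by eventually_elim (simp add: divide_less_eq mult.commute)
  qed
  have "AE \<omega> in M. eventually (\<lambda>n. \<forall>\<theta>\<in>Theta K. (\<Sum>i<n. log_ratio \<theta> (Z i \<omega>)) \<le> real n * c) sequentially"
    using K compact_Theta integrable_envelope abs_log_ratio_le continuous_ln_p c(2)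
    by (intro AE_eventually_uniform_sum_le[where G="\<lambda>z. u z - l z"] continuous_on_diff) auto
  moreover have "AE \<omega> in M. eventually (\<lambda>n. real n * c' \<le> (\<Sum>i<n. log_ratio \<theta>1 (Z i \<omega>))) sequentially"
  proof -
    have "AE \<omega> in M. eventually (\<lambda>n. (\<Sum>i<n. - log_ratio \<theta>1 (Z i \<omega>))
        \<le> real n * ((\<integral>z. - log_ratio \<theta>1 z \<partial>Pstar) + (expected_log_ratio \<theta>1 - c'))) sequentially"
      using c' by (intro AE_eventually_sum_le borel_measurable_uminus measurable_log_ratio[OF K']
          integrable_minus integrable_log_ratio[OF K']) auto
    then show ?thesis
      unfolding sum_negf Bochner_Integration.integral_minus
      by (rule eventually_mono) (auto elim: eventually_mono simp: algebra_simps)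
  qed
  ultimately show ?thesis
  proof eventually_elim
    case (elim \<omega>)
    from elim(1,2) pen_less show ?case
    proof eventually_elim
      case (elim n)
      then show ?case
        using pen_pos[of n] K'(2)
        by (intro crit_less_of_log_ratio_bounds[where \<theta>'=\<theta>1 and c=c and c'=c']) auto
    qed
  qed
qed

lemma AE_eventually_crit_less_of_not_in:
  assumes K: "1 \<le> K" and K': "1 \<le> K'" "\<theta>star \<in> Theta K'" "dens_measure mu (p \<theta>star) = Pstar"
    and not_in: "Pstar \<notin> model_class mu p Theta K"
    and "\<And>n. 0 < pen n K" "(\<lambda>n. pen n K' / real n) \<longlonglongrightarrow> 0"
  shows "AE \<omega> in M. eventually (\<lambda>n. crit p Theta pen Z n K \<omega> < crit p Theta pen Z n K' \<omega>) sequentially"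
proof (rule AE_eventually_crit_less[OF K K'(1,2)])
  fix \<theta> assume "\<theta> \<in> Theta K"
  with K not_in have "expected_log_ratio \<theta> < 0"
    by (subst expected_log_ratio_less_0_iff) (force simp: model_class_def)+
  also have "0 \<le> expected_log_ratio \<theta>star"
    using expected_log_ratio_less_0_iff[OF K'(1,2)] K'(3) by simp
  finally show "expected_log_ratio \<theta> < expected_log_ratio \<theta>star" .
qed fact+

lemma AE_eventually_crit_less_Suc:
  assumes K: "1 \<le> K"
    and KL_less: "KL_set Pstar (model_class mu p Theta (Suc K)) < KL_set Pstar (model_class mu p Theta K)"
    and "\<And>n. 0 < pen n K" "(\<lambda>n. pen n (Suc K) / real n) \<longlonglongrightarrow> 0"
  shows "AE \<omega> in M. eventually (\<lambda>n. crit p Theta pen Z n K \<omega> < crit p Theta pen Z n (Suc K) \<omega>) sequentially"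
proof -
  have "(INF \<theta>\<in>Theta (Suc K). ereal (- expected_log_ratio \<theta>)) < (INF \<theta>\<in>Theta K. ereal (- expected_log_ratio \<theta>))"
    using KL_less K by (simp add: KL_set_model_class)
  then obtain \<theta>1 where \<theta>1: "\<theta>1 \<in> Theta (Suc K)"
    and below: "ereal (- expected_log_ratio \<theta>1) < (INF \<theta>\<in>Theta K. ereal (- expected_log_ratio \<theta>))"
    by (auto simp: INF_less_iff)
  have "expected_log_ratio \<theta> < expected_log_ratio \<theta>1" if "\<theta> \<in> Theta K" for \<theta>
    using less_le_trans[OF below INF_lower[OF that]] by simp
  then show ?thesis using AE_eventually_crit_less[OF K _ \<theta>1] assms(3,4) by simp
qed

lemma not_in_model_class_below:
  assumes "Pstar \<notin> model_class mu p Theta (Kstar - 1)" "K \<in> {1..<Kstar}"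
  shows "Pstar \<notin> model_class mu p Theta K"
proof -
  have "model_class mu p Theta K \<subseteq> model_class mu p Theta (Kstar - 1)"
    using assms(2) by (intro model_class_mono) auto
  with assms(1) show ?thesis by blast
qed

lemma AE_eventually_KhatG_ge:
  assumes "1 \<le> Kstar" and "Pstar \<in> model_class mu p Theta Kstar"
    and not_in: "Pstar \<notin> model_class mu p Theta (Kstar - 1)"
    and "\<forall>n K. 1 \<le> K \<longrightarrow> 0 < pen n K" and "\<forall>K\<ge>1. (\<lambda>n. pen n K / real n) \<longlonglongrightarrow> 0"
  shows "AE \<omega> in M. eventually (\<lambda>n. enat Kstar \<le> KhatG p Theta pen Z n \<omega>) sequentially"
proof -
  obtain \<theta>star where "\<theta>star \<in> Theta Kstar" "dens_measure mu (p \<theta>star) = Pstar"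
    using assms(1,2) by (auto simp: model_class_def)
  then have "AE \<omega> in M. eventually (\<lambda>n. \<forall>K\<in>{1..<Kstar}.
      crit p Theta pen Z n K \<omega> < crit p Theta pen Z n Kstar \<omega>) sequentially"
    using not_in_model_class_below[OF not_in] assms
    by (intro AE_eventually_ball_finite AE_eventually_crit_less_of_not_in) auto
  then show ?thesis using \<open>1 \<le> Kstar\<close> by (auto elim!: eventually_mono intro: KhatG_ge)
qed

lemma AE_eventually_KhatL_ge:
  assumes not_in: "Pstar \<notin> model_class mu p Theta (Kstar - 1)"
    and "\<forall>n K. 1 \<le> K \<longrightarrow> 0 < pen n K" and "\<forall>K\<ge>1. (\<lambda>n. pen n K / real n) \<longlonglongrightarrow> 0"
  shows "(\<forall>K\<ge>1. Pstar \<notin> model_class mu p Theta K \<longrightarrow>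
      KL_set Pstar (model_class mu p Theta (Suc K)) < KL_set Pstar (model_class mu p Theta K))
    \<longrightarrow> (AE \<omega> in M. eventually (\<lambda>n. enat Kstar \<le> KhatL p Theta pen Z n \<omega>) sequentially)"
proof
  assume "\<forall>K\<ge>1. Pstar \<notin> model_class mu p Theta K \<longrightarrow>
    KL_set Pstar (model_class mu p Theta (Suc K)) < KL_set Pstar (model_class mu p Theta K)"
  then have "AE \<omega> in M. eventually (\<lambda>n. \<forall>K\<in>{1..<Kstar}.
      crit p Theta pen Z n K \<omega> < crit p Theta pen Z n (Suc K) \<omega>) sequentially"
    using not_in_model_class_below[OF not_in] assms
    by (intro AE_eventually_ball_finite AE_eventually_crit_less_Suc) auto
  then show "AE \<omega> in M. eventually (\<lambda>n. enat Kstar \<le> KhatL p Theta pen Z n \<omega>) sequentially"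
    by (auto elim!: eventually_mono intro: KhatL_ge)
qed

end

theorem propositionB1:
  fixes mu :: "'z::polish_space measure" and pstar :: "'z \<Rightarrow> real"
    and p :: "'p::metric_space \<Rightarrow> 'z \<Rightarrow> real" and Theta :: "nat \<Rightarrow> 'p set"
    and pen :: "nat \<Rightarrow> nat \<Rightarrow> real"
    and M :: "'w measure" and Z :: "nat \<Rightarrow> 'w \<Rightarrow> 'z"
    and l u :: "'z \<Rightarrow> real" and Kstar :: nat
  assumes sets_mu: "sets mu = sets (borel :: 'z measure)"
    and sigma_fin: "sigma_finite_measure mu"
    and pstar_meas: "pstar \<in> borel_measurable mu"
    and pstar_prob: "prob_space (dens_measure mu pstar)"
    and p_dens: "\<forall>\<theta>\<in>(\<Union>K\<in>{1..}. Theta K).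
                   p \<theta> \<in> borel_measurable mu \<and> prob_space (dens_measure mu (p \<theta>))"
    and M_prob: "prob_space M"
    and Z_meas: "\<forall>i. Z i \<in> measurable M (borel :: 'z measure)"
    and Z_indep: "prob_space.indep_vars M (\<lambda>_. borel) Z UNIV"
    and Z_law: "\<forall>i. distr M borel (Z i) = dens_measure mu pstar"
    and nested: "\<forall>K\<ge>1. Theta K \<subseteq> Theta (Suc K)"
    and A1: "\<forall>K\<ge>1. compact (Theta K) \<and> weakly_seq_compact (model_class mu p Theta K)"
    and A2: "\<forall>K\<ge>1. \<forall>z. continuous_on (Theta K) (\<lambda>\<theta>. ln (p \<theta> z))"
    and A3_int: "integrable (dens_measure mu pstar) (\<lambda>z. u z - l z)"
    and A3_star: "\<forall>z. 0 < pstar z \<and> l z \<le> ln (pstar z) \<and> ln (pstar z) \<le> u z"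
    and A3_model: "\<forall>\<theta>\<in>(\<Union>K\<in>{1..}. Theta K). \<forall>z.
                     0 < p \<theta> z \<and> l z \<le> ln (p \<theta> z) \<and> ln (p \<theta> z) \<le> u z"
    and A4_pos: "\<forall>n K. 1 \<le> K \<longrightarrow> 0 < pen n K"
    and A4_mono: "\<forall>n K. 1 \<le> K \<longrightarrow> pen n K \<le> pen n (Suc K)"
    and A4_infty: "\<forall>K\<ge>1. filterlim (\<lambda>n. pen n K) at_top sequentially"
    and A4_small: "\<forall>K\<ge>1. (\<lambda>n. pen n K / real n) \<longlonglongrightarrow> 0"
    and crit_meas: "\<forall>n K. 1 \<le> K \<longrightarrow> (\<lambda>\<omega>. crit p Theta pen Z n K \<omega>) \<in> borel_measurable M"
    and Kstar_pos: "1 \<le> Kstar"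
    and Kstar_in: "dens_measure mu pstar \<in> model_class mu p Theta Kstar"
    and Kstar_notin: "dens_measure mu pstar \<notin> model_class mu p Theta (Kstar - 1)"
  shows "((\<forall>K\<ge>1. dens_measure mu pstar \<notin> model_class mu p Theta K \<longrightarrow>
             KL_set (dens_measure mu pstar) (model_class mu p Theta (Suc K))
               < KL_set (dens_measure mu pstar) (model_class mu p Theta K))
          \<longrightarrow> (AE \<omega> in M. eventually (\<lambda>n. enat Kstar \<le> KhatL p Theta pen Z n \<omega>) sequentially))
       \<and> (AE \<omega> in M. eventually (\<lambda>n. enat Kstar \<le> KhatG p Theta pen Z n \<omega>) sequentially)"
proof -
  \<comment> \<open>Only the lower bound on the estimated order is claimed.\<close>
  have in_union: "\<theta> \<in> (\<Union>K\<in>{1..}. Theta K)" if "1 \<le> K" "\<theta> \<in> Theta K" for K \<theta>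
    using that by auto
  interpret nested_density_model M Z mu pstar p Theta l u
    by (intro nested_density_model.intro iid_sequence.intro iid_sequence_axioms.intro
        nested_density_model_axioms.intro M_prob)
      (use Z_indep Z_law sets_mu pstar_meas p_dens nested A1 A2 A3_int A3_star A3_model in_union
        in \<open>simp_all\<close>)
  show ?thesis
    using AE_eventually_KhatG_ge[OF Kstar_pos Kstar_in Kstar_notin]
      AE_eventually_KhatL_ge[OF Kstar_notin] A4_pos A4_small by simp
qed

end
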